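(* Let $\alpha,\beta>0$, $\gamma\ge0$, let $I$, $X$ and $\eta_0=\inf\{I(u,f):(u,f)\in X\}$ be as in the context. Let $\{(u_n,f_n)\}\subset X$ be a minimizing sequence for $\eta_0$ such that $0\le u_n\le1$, $0\le f_n\le 1$ on $(0,\infty)$, and for each $n$, $f_n(r)=0$ for $0<r\le\frac1n$ and $f_n$ solves $$f_n''=-\frac{2}{r}f_n'+\frac{\beta}{r^{2}}f_n u_n^{2}+\gamma f_n(f_n^{2}-1)\quad\text{on } \big(\tfrac1n,\infty\big).$$ Suppose $u,f\in W^{1,2}_{\mathrm{loc}}(0,\infty)$ are such that $u_n\to u$ and $f_n\to f$ weakly in $W^{1,2}(a,b)$ and uniformly on $[a,b]$ for every $0<a<b<\infty$. Then $\lim_{r\to0}f(r)=0$.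
   Context: For real parameters $\alpha,\beta>0$, $\gamma\ge0$, $$I(u,f)=\int_{0}^{\infty} \Big\{2(u')^{2}+\frac{(1-u^{2})^{2}}{r^{2}}+\alpha\big[ r^{2}(f')^{2}+\beta f^{2}u^{2}\big]+\frac{\alpha\gamma}{2}r^{2}(f^{2}-1)^{2}\Big\}\,dr,$$ and $X$ is the set of pairs $(u,f)$ of real functions on $(0,\infty)$, absolutely continuous on every compact subinterval of $(0,\infty)$, with $I(u,f)<\infty$ and $\lim_{r\to0}f(r)=0$, $\lim_{r\to0}u(r)=1$, $\lim_{r\to\infty}f(r)=1$, $\lim_{r\to\infty}u(r)=0$. *)

theory Defs
  imports "HOL-Analysis.Analysis"
begin

definition abs_cont_on :: "real set \<Rightarrow> (real \<Rightarrow> real) \<Rightarrow> bool" where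
  "abs_cont_on S g \<longleftrightarrow>
     (\<forall>e>0. \<exists>d>0. \<forall>(m::nat) (a::nat \<Rightarrow> real) (b::nat \<Rightarrow> real).
        (\<forall>i<m. a i \<in> S \<and> b i \<in> S \<and> {a i..b i} \<subseteq> S \<and> a i \<le> b i) \<and>
        (\<forall>i<m. \<forall>j<m. i \<noteq> j \<longrightarrow> b i \<le> a j \<or> b j \<le> a i) \<and>
        (\<Sum>i<m. b i - a i) < d
        \<longrightarrow> (\<Sum>i<m. \<bar>g (b i) - g (a i)\<bar>) < e)"

definition loc_AC :: "(real \<Rightarrow> real) \<Rightarrow> bool" where
  "loc_AC g \<longleftrightarrow> (\<forall>a b. 0 < a \<longrightarrow> a \<le> b \<longrightarrow> abs_cont_on {a..b} g)"

text \<open>The energy functional I(u,f) (integrand is nonnegative; value in [0,inf]).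
  The derivative of an absolutely continuous function is its a.e. derivative.\<close>
definition energy :: "real \<Rightarrow> real \<Rightarrow> real \<Rightarrow> (real \<Rightarrow> real) \<Rightarrow> (real \<Rightarrow> real) \<Rightarrow> ennreal" where
  "energy \<alpha> \<beta> \<gamma> u f =
     (\<integral>\<^sup>+ r. ennreal (2 * (deriv u r)\<^sup>2 + (1 - (u r)\<^sup>2)\<^sup>2 / r\<^sup>2
            + \<alpha> * (r\<^sup>2 * (deriv f r)\<^sup>2 + \<beta> * (f r)\<^sup>2 * (u r)\<^sup>2)
            + \<alpha> * \<gamma> / 2 * r\<^sup>2 * ((f r)\<^sup>2 - 1)\<^sup>2) * indicator {0<..} r \<partial>lebesgue)"

definition admissible :: "real \<Rightarrow> real \<Rightarrow> real \<Rightarrow> ((real \<Rightarrow> real) \<times> (real \<Rightarrow> real)) set" where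
  "admissible \<alpha> \<beta> \<gamma> = {(u, f). loc_AC u \<and> loc_AC f \<and> energy \<alpha> \<beta> \<gamma> u f < \<infinity> \<and>
      (f \<longlongrightarrow> 0) (at_right 0) \<and> (u \<longlongrightarrow> 1) (at_right 0) \<and>
      (f \<longlongrightarrow> 1) at_top \<and> (u \<longlongrightarrow> 0) at_top}"

definition eta0 :: "real \<Rightarrow> real \<Rightarrow> real \<Rightarrow> ennreal" where
  "eta0 \<alpha> \<beta> \<gamma> = Inf ((\<lambda>(u, f). energy \<alpha> \<beta> \<gamma> u f) ` admissible \<alpha> \<beta> \<gamma>)"

definition L2_on :: "real \<Rightarrow> real \<Rightarrow> (real \<Rightarrow> real) \<Rightarrow> bool" where
  "L2_on a b g \<longleftrightarrow> g \<in> borel_measurable lebesgue \<and> set_integrable lebesgue {a..b} (\<lambda>x. (g x)\<^sup>2)"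

text \<open>W^{1,2}_loc(0,inf), represented by its (locally) absolutely continuous representative.\<close>
definition W12_loc :: "(real \<Rightarrow> real) \<Rightarrow> bool" where
  "W12_loc g \<longleftrightarrow> loc_AC g \<and> (\<forall>a b. 0 < a \<longrightarrow> a < b \<longrightarrow> L2_on a b (deriv g))"

text \<open>Weak convergence in W^{1,2}(a,b): since every bounded linear functional on W^{1,2}(a,b)
  has the form v \<mapsto> int v g0 + int v' g1 with g0, g1 in L^2(a,b), this is weak
  L^2 convergence of the functions and of their derivatives.\<close>
definition weak_W12_conv :: "real \<Rightarrow> real \<Rightarrow> (nat \<Rightarrow> real \<Rightarrow> real) \<Rightarrow> (real \<Rightarrow> real) \<Rightarrow> bool" where
  "weak_W12_conv a b vs v \<longleftrightarrow>
     (\<forall>g. L2_on a b g \<longrightarrow>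
        (\<lambda>n. set_lebesgue_integral lebesgue {a..b} (\<lambda>x. vs n x * g x))
           \<longlonglongrightarrow> set_lebesgue_integral lebesgue {a..b} (\<lambda>x. v x * g x) \<and>
        (\<lambda>n. set_lebesgue_integral lebesgue {a..b} (\<lambda>x. deriv (vs n) x * g x))
           \<longlonglongrightarrow> set_lebesgue_integral lebesgue {a..b} (\<lambda>x. deriv v x * g x))"

end

theory Submission
  imports Defs
begin

text \<open>
  Each \<open>f\<^sub>n\<close> vanishes up to \<open>p = 1/n\<close> and solves \<open>(r\<^sup>2 f')' = \<beta> f u\<^sup>2 + \<gamma> r\<^sup>2 f (f\<^sup>2 - 1)\<close>
  beyond. The flux \<open>r\<^sup>2 f' + \<gamma> r\<^sup>3/3\<close> is nondecreasing, and it is nonnegative because \<open>f\<close> rises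
  from \<open>0\<close>; hence \<open>f + \<gamma> r\<^sup>2/6\<close> is nondecreasing. So if \<open>f\<^sub>n(a) \<ge> \<epsilon>\<close>, then \<open>f\<^sub>n \<ge> \<epsilon>/2\<close> on
  \<open>[a, \<rho>]\<close>, where \<open>\<rho>\<close> depends only on \<open>\<epsilon>, \<beta>, \<gamma>\<close> and a bound on the energies. On that range
  the potential term of the energy forces \<open>\<integral>\<^sub>a\<^sup>R u\<^sub>n\<^sup>2 \<ge> R/8\<close>, so the flux grows like
  \<open>\<beta> \<epsilon> R\<close>, i.e. \<open>f\<^sub>n' \<ge> c \<beta> \<epsilon> / r\<close>; integrating from \<open>2a\<close> to \<open>\<rho>\<close> contradicts \<open>f\<^sub>n \<le> 1\<close> as
  soon as \<open>a < \<delta>(\<epsilon>)\<close>, a threshold independent of \<open>n\<close>. Thus \<open>f\<^sub>n < \<epsilon>\<close> on \<open>(1/n, \<delta>)\<close>, and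
  \<open>f \<le> \<epsilon>\<close> on \<open>(0, \<delta>)\<close> in the pointwise limit.
\<close>

lemma abs_cont_on_imp_uniformly_continuous_on:
  assumes "abs_cont_on S g" and "is_interval S"
  shows "uniformly_continuous_on S g"
  unfolding uniformly_continuous_on_def
proof (intro allI impI)
  fix e :: real assume "0 < e"
  then obtain d where "d > 0" and small_variation: "\<forall>(m::nat) (a::nat \<Rightarrow> real) b.
        (\<forall>i<m. a i \<in> S \<and> b i \<in> S \<and> {a i..b i} \<subseteq> S \<and> a i \<le> b i) \<and>
        (\<forall>i<m. \<forall>j<m. i \<noteq> j \<longrightarrow> b i \<le> a j \<or> b j \<le> a i) \<and>
        (\<Sum>i<m. b i - a i) < d \<longrightarrow> (\<Sum>i<m. \<bar>g (b i) - g (a i)\<bar>) < e"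
    using assms(1) unfolding abs_cont_on_def by blast
  have close: "\<bar>g y - g x\<bar> < e" if "x \<in> S" "y \<in> S" "x \<le> y" "y - x < d" for x y
  proof -
    have "{x..y} \<subseteq> S"
      using mem_is_interval_1_I[OF assms(2) that(1,2)] by auto
    then show ?thesis
      using that small_variation[rule_format, of "Suc 0" "\<lambda>_. x" "\<lambda>_. y"] by simp
  qed
  have "dist (g y) (g x) < e" if "x \<in> S" "y \<in> S" "dist y x < d" for x y
    using close[of x y] close[of y x] that
    by (cases "x \<le> y") (auto simp: dist_real_def abs_minus_commute)
  with \<open>d > 0\<close> show "\<exists>d>0. \<forall>x\<in>S. \<forall>x'\<in>S. dist x' x < d \<longrightarrow> dist (g x') (g x) < e"
    by blast
qed

lemma loc_AC_continuous_on:
  assumes "loc_AC g"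
  shows "continuous_on {0<..} g"
proof (intro continuous_at_imp_continuous_on ballI)
  fix x :: real assume "x \<in> {0<..}"
  then have "abs_cont_on {x / 2..x + 1} g"
    using assms unfolding loc_AC_def by simp
  then have "continuous_on {x / 2..x + 1} g"
    by (intro uniformly_continuous_imp_continuous abs_cont_on_imp_uniformly_continuous_on)
       (simp_all add: is_interval_cc)
  then show "isCont g x"
    by (rule continuous_on_interior) (use \<open>x \<in> {0<..}\<close> in simp)
qed

lemma potential_integral_le_energy:
  assumes "0 \<le> \<alpha>" "0 \<le> \<beta>" "0 \<le> \<gamma>" "0 < a" "continuous_on {a..b} u"
  shows "ennreal (integral {a..b} (\<lambda>t. (1 - (u t)\<^sup>2)\<^sup>2 / t\<^sup>2)) \<le> energy \<alpha> \<beta> \<gamma> u f"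
proof -
  let ?g = "\<lambda>t. (1 - (u t)\<^sup>2)\<^sup>2 / t\<^sup>2"
  have "continuous_on {a..b} ?g"
    using assms(4) by (auto intro!: continuous_intros assms(5))
  then have "(?g has_integral integral {a..b} ?g) {a..b}"
    using integrable_continuous_interval integrable_integral by blast
  then have "ennreal (integral {a..b} ?g) = (\<integral>\<^sup>+ r. ennreal (?g r) * indicator {a..b} r \<partial>lborel)"
    by (intro nn_integral_has_integral_lebesgue'[symmetric]) auto
  also have "\<dots> \<le> energy \<alpha> \<beta> \<gamma> u f"
    unfolding energy_def nn_integral_completion using assms(1-4)
    by (intro nn_integral_mono)
       (auto split: split_indicator
             intro!: ennreal_leI add_increasing add_increasing2 mult_nonneg_nonneg)
  finally show ?thesis .
qed

lemma integral_square_ge: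
  fixes u :: "real \<Rightarrow> real"
  assumes "0 < a" "a \<le> R" "continuous_on {a..R} u"
  shows "(R - a) / 2 - 2 * R\<^sup>2 * integral {a..R} (\<lambda>t. (1 - (u t)\<^sup>2)\<^sup>2 / t\<^sup>2)
           \<le> integral {a..R} (\<lambda>t. (u t)\<^sup>2)"
proof -
  define g where "g t = (1 - (u t)\<^sup>2)\<^sup>2 / t\<^sup>2" for t
  have "g integrable_on {a..R}"
    unfolding g_def using assms(1)
    by (intro integrable_continuous_interval) (auto intro!: continuous_intros assms(3))
  then have "((\<lambda>t. 1 / 2 - 2 * R\<^sup>2 * g t)
              has_integral (R - a) / 2 - 2 * R\<^sup>2 * integral {a..R} g) {a..R}"
    using has_integral_diff[OF has_integral_const_real[of "1 / 2" a R]
        has_integral_mult_right[OF integrable_integral, of g "{a..R}" "2 * R\<^sup>2"]] assms(2)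
    by simp
  moreover have "((\<lambda>t. (u t)\<^sup>2) has_integral integral {a..R} (\<lambda>t. (u t)\<^sup>2)) {a..R}"
    by (intro integrable_integral integrable_continuous_interval continuous_intros assms(3))
  moreover have "1 / 2 - 2 * R\<^sup>2 * g t \<le> (u t)\<^sup>2" if t: "t \<in> {a..R}" for t
  proof -
    have "0 < t" using t assms(1) by auto
    \<comment> \<open>\<open>w - (1/2 - 2 (1 - w)\<^sup>2) = 2 (w - 3/4)\<^sup>2 + 3/8\<close>\<close>
    have "1 / 2 - 2 * (1 - (u t)\<^sup>2)\<^sup>2 \<le> (u t)\<^sup>2"
      using zero_le_power2[of "(u t)\<^sup>2 - 3 / 4"] by (simp add: power2_eq_square algebra_simps)
    moreover have "(1 - (u t)\<^sup>2)\<^sup>2 \<le> R\<^sup>2 * g t"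
      using \<open>0 < t\<close> t unfolding g_def by (simp add: field_simps mult_right_mono power_mono)
    ultimately show ?thesis by linarith
  qed
  ultimately show ?thesis unfolding g_def by (rule has_integral_le)
qed

lemma derivative_ge_inverse_imp_ln_growth:
  fixes f f' :: "real \<Rightarrow> real"
  assumes "0 < a" "a \<le> b"
    and "\<And>r. a \<le> r \<Longrightarrow> r \<le> b \<Longrightarrow> (f has_real_derivative f' r) (at r)"
    and "\<And>r. a \<le> r \<Longrightarrow> r \<le> b \<Longrightarrow> c / r \<le> f' r"
  shows "c * (ln b - ln a) \<le> f b - f a"
proof -
  let ?G = "\<lambda>r. f r - c * ln r"
  have "?G a \<le> ?G b"
  proof (rule DERIV_nonneg_imp_nondecreasing[of a b ?G])
    fix r assume r: "a \<le> r" "r \<le> b"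
    then have "(?G has_real_derivative f' r - c / r) (at r)"
      using assms(1,3) by (auto intro!: derivative_eq_intros simp: field_simps)
    then show "\<exists>y. (?G has_real_derivative y) (at r) \<and> 0 \<le> y"
      using assms(4)[OF r] by force
  qed (fact assms(2))
  then show ?thesis by (simp add: algebra_simps)
qed

locale radial_ode =
  fixes \<beta> \<gamma> p :: real and u f df :: "real \<Rightarrow> real"
  assumes \<beta>_nonneg: "0 \<le> \<beta>" and \<gamma>_nonneg: "0 \<le> \<gamma>" and p_pos: "0 < p"
    and f_at_p: "f p = 0" and f_continuous_at_right: "continuous (at_right p) f"
    and f_range: "\<And>r. p < r \<Longrightarrow> 0 \<le> f r \<and> f r \<le> 1"
    and f_has_derivative: "\<And>r. p < r \<Longrightarrow> (f has_real_derivative df r) (at r)"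
    and df_has_derivative: "\<And>r. p < r \<Longrightarrow> (df has_real_derivative
          - 2 / r * df r + \<beta> / r\<^sup>2 * f r * (u r)\<^sup>2 + \<gamma> * f r * ((f r)\<^sup>2 - 1)) (at r)"
begin

text \<open>The equation reads \<open>(r\<^sup>2 f')' = \<beta> f u\<^sup>2 + \<gamma> r\<^sup>2 f (f\<^sup>2 - 1)\<close>; the term \<open>\<gamma> r\<^sup>3/3\<close> makes the
  derivative of the flux nonnegative, as \<open>f\<^sup>3 - f + 1 > 0\<close> for \<open>0 \<le> f \<le> 1\<close>.\<close>
definition flux :: "real \<Rightarrow> real" where
  "flux r = r\<^sup>2 * df r + \<gamma> * r ^ 3 / 3"

lemma flux_has_derivative:
  assumes "p < r"
  shows "(flux has_real_derivative \<beta> * f r * (u r)\<^sup>2 + \<gamma> * r\<^sup>2 * ((f r) ^ 3 - f r + 1)) (at r)"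
proof -
  have "(flux has_real_derivative 2 * r * df r + r\<^sup>2 * (- 2 / r * df r + \<beta> / r\<^sup>2 * f r * (u r)\<^sup>2
          + \<gamma> * f r * ((f r)\<^sup>2 - 1)) + \<gamma> * r\<^sup>2) (at r)"
    unfolding flux_def using df_has_derivative[OF assms] by (auto intro!: derivative_eq_intros)
  moreover have "2 * r * df r + r\<^sup>2 * (- 2 / r * df r + \<beta> / r\<^sup>2 * f r * (u r)\<^sup>2
          + \<gamma> * f r * ((f r)\<^sup>2 - 1)) + \<gamma> * r\<^sup>2
        = \<beta> * f r * (u r)\<^sup>2 + \<gamma> * r\<^sup>2 * ((f r) ^ 3 - f r + 1)"
    using assms p_pos by (simp add: field_simps power2_eq_square power3_eq_cube)
  ultimately show ?thesis by simp
qed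

lemma flux_derivative_ge:
  assumes "p < r" and "c \<le> f r"
  shows "\<beta> * c * (u r)\<^sup>2 \<le> \<beta> * f r * (u r)\<^sup>2 + \<gamma> * r\<^sup>2 * ((f r) ^ 3 - f r + 1)"
proof -
  have "0 \<le> f r" "f r \<le> 1" using f_range assms(1) by auto
  then have "0 \<le> (f r) ^ 3 - f r + 1" by (smt (verit) zero_le_power)
  then have "0 \<le> \<gamma> * r\<^sup>2 * ((f r) ^ 3 - f r + 1)" using \<gamma>_nonneg by simp
  moreover have "\<beta> * c * (u r)\<^sup>2 \<le> \<beta> * f r * (u r)\<^sup>2"
    using \<beta>_nonneg assms(2) by (intro mult_right_mono mult_left_mono) auto
  ultimately show ?thesis by linarith
qed

lemma flux_mono:
  assumes "p < x" "x \<le> y"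
  shows "flux x \<le> flux y"
proof (rule DERIV_nonneg_imp_nondecreasing[of x y flux])
  fix z assume "x \<le> z" "z \<le> y"
  then have "p < z" using assms by linarith
  then have "0 \<le> \<beta> * f z * (u z)\<^sup>2 + \<gamma> * z\<^sup>2 * ((f z) ^ 3 - f z + 1)"
    using flux_derivative_ge[of z 0] f_range by simp
  then show "\<exists>w. (flux has_real_derivative w) (at z) \<and> 0 \<le> w"
    using flux_has_derivative[OF \<open>p < z\<close>] by blast
qed (fact assms(2))

text \<open>A negative flux at \<open>s\<close> would stay negative on \<open>(p, s]\<close>, so \<open>f\<close> would decrease there
  and could not rise from \<open>f p = 0\<close> to the positive value it has before \<open>s\<close>.\<close>
lemma flux_nonneg:
  assumes "p < s"
  shows "0 \<le> flux s"
proof (rule ccontr)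
  assume "\<not> 0 \<le> flux s"
  have df_neg: "df t < 0" if "p < t" "t \<le> s" for t
  proof -
    have "t\<^sup>2 * df t < 0"
      using flux_mono[OF that] \<open>\<not> 0 \<le> flux s\<close> \<gamma>_nonneg that p_pos unfolding flux_def
      by (smt (verit) divide_nonneg_nonneg mult_nonneg_nonneg zero_le_power)
    then show ?thesis by (simp add: mult_less_0_iff)
  qed
  define m where "m = (p + s) / 2"
  have m: "p < m" "m < s" using assms unfolding m_def by auto
  have "f s < f m"
    using m df_neg f_has_derivative by (intro DERIV_neg_imp_decreasing[OF m(2)]) force
  then have "0 < f m" using f_range[OF assms] by linarith
  have "f m \<le> f t" if "p < t" "t < m" for t
  proof (rule DERIV_nonpos_imp_nonincreasing[of t m f])
    fix x assume "t \<le> x" "x \<le> m"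
    then have "p < x" "x \<le> s" using that m by auto
    then show "\<exists>y. DERIV f x :> y \<and> y \<le> 0"
      using f_has_derivative df_neg by (meson less_imp_le)
  qed (use that in simp)
  then have "f m \<le> f p"
    using f_continuous_at_right m(1)
    by (intro tendsto_lowerbound[of f "f p" "at_right p"])
       (auto simp: continuous_within eventually_at_right_field)
  then show False using \<open>0 < f m\<close> f_at_p by simp
qed

lemma f_lower_bound:
  assumes "p < a" "a \<le> r"
  shows "f a - \<gamma> * r\<^sup>2 / 6 \<le> f r"
proof -
  let ?h = "\<lambda>r. f r + \<gamma> * r\<^sup>2 / 6"
  have "?h a \<le> ?h r"
  proof (rule DERIV_nonneg_imp_nondecreasing[of a r ?h])
    fix z assume "a \<le> z" "z \<le> r"
    then have "p < z" using assms by linarith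
    then have "(?h has_real_derivative df z + \<gamma> * z / 3) (at z)"
      using f_has_derivative by (auto intro!: derivative_eq_intros)
    moreover have "0 \<le> z\<^sup>2 * (df z + \<gamma> * z / 3)"
      using flux_nonneg[OF \<open>p < z\<close>] unfolding flux_def
      by (simp add: algebra_simps power2_eq_square power3_eq_cube)
    then have "0 \<le> df z + \<gamma> * z / 3"
      using \<open>p < z\<close> p_pos by (simp add: zero_le_mult_iff)
    ultimately show "\<exists>y. (?h has_real_derivative y) (at z) \<and> 0 \<le> y" by blast
  qed (fact assms(2))
  moreover have "0 \<le> \<gamma> * a\<^sup>2" using \<gamma>_nonneg by simp
  ultimately show ?thesis by linarith
qed

lemma flux_increment_ge:
  assumes "p < a" "a \<le> R" "continuous_on {a..R} u" and f_ge: "\<And>x. x \<in> {a..R} \<Longrightarrow> c \<le> f x"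
  shows "\<beta> * c * integral {a..R} (\<lambda>x. (u x)\<^sup>2) \<le> flux R - flux a"
proof -
  let ?flux' = "\<lambda>r. \<beta> * f r * (u r)\<^sup>2 + \<gamma> * r\<^sup>2 * ((f r) ^ 3 - f r + 1)"
  have "(?flux' has_integral flux R - flux a) {a..R}"
    using assms(1,2) flux_has_derivative
    by (intro fundamental_theorem_of_calculus)
       (auto simp: has_real_derivative_iff_has_vector_derivative[symmetric]
             intro: has_field_derivative_at_within)
  moreover have "((\<lambda>x. \<beta> * c * (u x)\<^sup>2) has_integral \<beta> * c * integral {a..R} (\<lambda>x. (u x)\<^sup>2)) {a..R}"
    using assms(3)
    by (intro has_integral_mult_right integrable_integral integrable_continuous_interval
          continuous_intros)
  ultimately show ?thesis
    using assms(1) f_ge flux_derivative_ge by (elim has_integral_le) auto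
qed

lemma df_ge_inverse:
  assumes "p < a" "2 * a \<le> R" "0 \<le> c" "continuous_on {a..R} u"
    and f_ge: "\<And>x. x \<in> {a..R} \<Longrightarrow> c \<le> f x"
    and potential: "integral {a..R} (\<lambda>t. (1 - (u t)\<^sup>2)\<^sup>2 / t\<^sup>2) \<le> M"
    and "16 * M * R \<le> 1" "16 * \<gamma> * R\<^sup>2 \<le> \<beta> * c"
  shows "\<beta> * c / 12 / R \<le> df R"
proof -
  have "0 < a" "a \<le> R" "0 < R" using assms(1,2) p_pos by auto
  define V where "V = integral {a..R} (\<lambda>t. (1 - (u t)\<^sup>2)\<^sup>2 / t\<^sup>2)"
  define I where "I = integral {a..R} (\<lambda>t. (u t)\<^sup>2)"
  have "(R - a) / 2 - 2 * R\<^sup>2 * V \<le> I"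
    unfolding V_def I_def using integral_square_ge[OF \<open>0 < a\<close> \<open>a \<le> R\<close> assms(4)] .
  moreover have "2 * R\<^sup>2 * V \<le> R / 8"
  proof -
    have "R\<^sup>2 * V \<le> R\<^sup>2 * M"
      using potential unfolding V_def by (intro mult_left_mono) auto
    moreover have "16 * (R\<^sup>2 * M) \<le> R"
      using \<open>0 < R\<close> mult_left_mono[OF assms(7), of R] by (simp add: power2_eq_square algebra_simps)
    ultimately show ?thesis by (simp add: mult.assoc)
  qed
  moreover have "R / 4 \<le> (R - a) / 2" using assms(2) by simp
  ultimately have "R / 8 \<le> I" by linarith
  then have "\<beta> * c * (R / 8) \<le> \<beta> * c * I"
    using \<beta>_nonneg assms(3) by (intro mult_left_mono) auto
  also have "\<dots> \<le> flux R - flux a"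
    unfolding I_def by (rule flux_increment_ge[OF assms(1) \<open>a \<le> R\<close> assms(4) f_ge])
  finally have "\<beta> * c * R / 8 \<le> flux R - flux a" by simp
  moreover have "0 \<le> flux a" using flux_nonneg[OF assms(1)] .
  moreover have "\<gamma> * R ^ 3 / 3 \<le> \<beta> * c * R / 48"
    using mult_left_mono[OF assms(8), of R] \<open>0 < R\<close>
    by (simp add: power2_eq_square power3_eq_cube algebra_simps)
  moreover have "0 \<le> \<beta> * c * R" using \<beta>_nonneg assms(3) \<open>0 < R\<close> by simp
  ultimately have "\<beta> * c * R / 12 \<le> R\<^sup>2 * df R"
    unfolding flux_def by linarith
  then show ?thesis
    using \<open>0 < R\<close> by (simp add: pos_divide_le_eq power2_eq_square mult_ac)
qed

text \<open>If \<open>f a \<ge> \<epsilon>\<close>, then \<open>f' \<ge> (\<beta> \<epsilon> / 24) / r\<close> on \<open>[2 a, \<rho>]\<close>, and \<open>f\<close> would gain more than \<open>1\<close>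
  there.\<close>
lemma f_less_near_origin:
  assumes "0 < \<beta>" "continuous_on {p<..} u"
    and potential: "\<And>x y. p < x \<Longrightarrow> integral {x..y} (\<lambda>t. (1 - (u t)\<^sup>2)\<^sup>2 / t\<^sup>2) \<le> M"
    and "0 < \<epsilon>" "0 < \<rho>" "16 * M * \<rho> \<le> 1" "\<gamma> * \<rho>\<^sup>2 \<le> \<epsilon>" "32 * \<gamma> * \<rho>\<^sup>2 \<le> \<beta> * \<epsilon>"
    and "p < a" "a < \<rho> * exp (- 24 / (\<beta> * \<epsilon>)) / 2"
  shows "f a < \<epsilon>"
proof (rule ccontr)
  assume "\<not> f a < \<epsilon>"
  define c where "c = \<beta> * \<epsilon> / 24"
  have "0 < a" using assms(9) p_pos by linarith
  have "\<rho> * exp (- 24 / (\<beta> * \<epsilon>)) < \<rho>" using assms(1,4,5) by simp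
  then have "2 * a < \<rho>" using assms(10) by linarith
  have "0 \<le> M" using potential[of "p + 1" "p + 1"] p_pos by simp
  have f_ge: "\<epsilon> / 2 \<le> f x" if "x \<in> {a..\<rho>}" for x
  proof -
    have "\<gamma> * x\<^sup>2 \<le> \<gamma> * \<rho>\<^sup>2"
      using that \<open>0 < a\<close> \<gamma>_nonneg by (intro mult_left_mono power_mono) auto
    then show ?thesis
      using f_lower_bound[of a x] that assms(4,7,9) \<open>\<not> f a < \<epsilon>\<close> by auto
  qed
  have "c / R \<le> df R" if "2 * a \<le> R" "R \<le> \<rho>" for R
  proof -
    have "16 * M * R \<le> 1"
      using assms(6) that \<open>0 \<le> M\<close> by (smt (verit) mult_left_mono)
    moreover have "16 * \<gamma> * R\<^sup>2 \<le> \<beta> * (\<epsilon> / 2)"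
      using that assms(8) \<open>0 < a\<close> \<gamma>_nonneg mult_left_mono[OF power_mono[of R \<rho> 2], of "16 * \<gamma>"]
      by simp
    ultimately have "\<beta> * (\<epsilon> / 2) / 12 / R \<le> df R"
      using that assms(2,4,9) potential[of a R] f_ge
      by (intro df_ge_inverse) (auto intro: continuous_on_subset)
    then show ?thesis unfolding c_def by simp
  qed
  then have "c * (ln \<rho> - ln (2 * a)) \<le> f \<rho> - f (2 * a)"
    using \<open>0 < a\<close> \<open>2 * a < \<rho>\<close> assms(9) f_has_derivative
    by (intro derivative_ge_inverse_imp_ln_growth[of "2 * a" \<rho> f df]) auto
  moreover have "1 < c * (ln \<rho> - ln (2 * a))"
  proof -
    have "ln (2 * a) < ln \<rho> - 24 / (\<beta> * \<epsilon>)"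
      using assms(5,10) \<open>0 < a\<close> ln_less_cancel_iff[of "2 * a" "\<rho> * exp (- 24 / (\<beta> * \<epsilon>))"]
      by (simp add: ln_mult)
    then show ?thesis
      using mult_strict_left_mono[of "24 / (\<beta> * \<epsilon>)" "ln \<rho> - ln (2 * a)" c] assms(1,4)
      unfolding c_def by simp
  qed
  moreover have "0 \<le> f (2 * a)" "f \<rho> \<le> 1"
    using f_range[of "2 * a"] f_range[of \<rho>] \<open>2 * a < \<rho>\<close> \<open>0 < a\<close> assms(9) by auto
  ultimately show False by linarith
qed

end

lemma eta0_less_top:
  assumes "(u, f) \<in> admissible \<alpha> \<beta> \<gamma>"
  shows "eta0 \<alpha> \<beta> \<gamma> < \<infinity>"
proof -
  have "eta0 \<alpha> \<beta> \<gamma> \<le> energy \<alpha> \<beta> \<gamma> u f"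
    unfolding eta0_def using assms by (intro Inf_lower) force
  also have "\<dots> < \<infinity>" using assms unfolding admissible_def by simp
  finally show ?thesis .
qed

lemma eventually_less_ennreal_of_tendsto:
  fixes X :: "'a \<Rightarrow> ennreal"
  assumes "(X \<longlongrightarrow> L) F" "L < \<infinity>"
  obtains B :: real where "\<forall>\<^sub>F x in F. X x < ennreal B"
proof
  show "\<forall>\<^sub>F x in F. X x < ennreal (enn2real L + 1)"
    using assms(2) by (intro order_tendstoD(2)[OF assms(1)]) (cases L; simp add: ennreal_less_iff)
qed

lemma small_radius_exists:
  fixes M \<beta> \<gamma> \<epsilon> :: real
  assumes "0 < \<beta>" "0 < \<epsilon>"
  obtains \<rho> where "0 < \<rho>" "16 * M * \<rho> \<le> 1" "\<gamma> * \<rho>\<^sup>2 \<le> \<epsilon>" "32 * \<gamma> * \<rho>\<^sup>2 \<le> \<beta> * \<epsilon>"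
proof -
  have "\<forall>\<^sub>F \<rho> in at_right 0. 0 < \<rho> \<and> 16 * M * \<rho> < 1 \<and> \<gamma> * \<rho>\<^sup>2 < \<epsilon> \<and> 32 * \<gamma> * \<rho>\<^sup>2 < \<beta> * \<epsilon>"
    using assms
    by (intro eventually_conj eventually_at_right_less order_tendstoD(2)[where y = 0])
       (auto intro!: tendsto_eq_intros)
  then obtain \<rho> where "0 < \<rho> \<and> 16 * M * \<rho> < 1 \<and> \<gamma> * \<rho>\<^sup>2 < \<epsilon> \<and> 32 * \<gamma> * \<rho>\<^sup>2 < \<beta> * \<epsilon>"
    using eventually_happens'[OF trivial_limit_at_right_real] by blast
  then show ?thesis using that by auto
qed

lemma admissible_ode_solution_less_near_origin:
  assumes "0 \<le> \<alpha>" "0 < \<beta>" "0 \<le> \<gamma>"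
    and adm: "(u, f) \<in> admissible \<alpha> \<beta> \<gamma>" and energy_less: "energy \<alpha> \<beta> \<gamma> u f < ennreal M"
    and "0 < p" and vanish: "\<And>r. 0 < r \<Longrightarrow> r \<le> p \<Longrightarrow> f r = 0"
    and range: "\<And>r. 0 < r \<Longrightarrow> 0 \<le> f r \<and> f r \<le> 1"
    and ode: "\<exists>df. \<forall>r > p. (f has_real_derivative df r) (at r) \<and>
                 (df has_real_derivative
                    (- 2 / r * df r + \<beta> / r\<^sup>2 * f r * (u r)\<^sup>2
                     + \<gamma> * f r * ((f r)\<^sup>2 - 1))) (at r)"
    and "0 < \<epsilon>" "0 < \<rho>" "16 * M * \<rho> \<le> 1" "\<gamma> * \<rho>\<^sup>2 \<le> \<epsilon>" "32 * \<gamma> * \<rho>\<^sup>2 \<le> \<beta> * \<epsilon>"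
    and "p < a" "a < \<rho> * exp (- 24 / (\<beta> * \<epsilon>)) / 2"
  shows "f a < \<epsilon>"
proof -
  obtain df where df: "\<forall>r > p. (f has_real_derivative df r) (at r) \<and>
                 (df has_real_derivative
                    (- 2 / r * df r + \<beta> / r\<^sup>2 * f r * (u r)\<^sup>2
                     + \<gamma> * f r * ((f r)\<^sup>2 - 1))) (at r)"
    using ode by blast
  have u_cont: "continuous_on {0<..} u" and "continuous_on {0<..} f"
    using adm loc_AC_continuous_on unfolding admissible_def by auto
  then have "isCont f p"
    using \<open>0 < p\<close> by (simp add: continuous_on_eq_continuous_at)
  then have "continuous (at_right p) f"
    by (rule continuous_at_imp_continuous_at_within)
  then interpret radial_ode \<beta> \<gamma> p u f df
    using assms(2,3,6) vanish[of p] range df by unfold_locales auto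
  have "integral {x..y} (\<lambda>t. (1 - (u t)\<^sup>2)\<^sup>2 / t\<^sup>2) \<le> M" if "p < x" for x y
  proof -
    have "0 < x" using that \<open>0 < p\<close> by linarith
    moreover have "continuous_on {x..y} u"
      using \<open>0 < x\<close> by (intro continuous_on_subset[OF u_cont]) auto
    ultimately have "ennreal (integral {x..y} (\<lambda>t. (1 - (u t)\<^sup>2)\<^sup>2 / t\<^sup>2)) \<le> energy \<alpha> \<beta> \<gamma> u f"
      using assms(1-3) by (intro potential_integral_le_energy) auto
    then have "ennreal (integral {x..y} (\<lambda>t. (1 - (u t)\<^sup>2)\<^sup>2 / t\<^sup>2)) < ennreal M"
      using energy_less by (rule order.strict_trans1)
    then show ?thesis
      by (cases "0 \<le> integral {x..y} (\<lambda>t. (1 - (u t)\<^sup>2)\<^sup>2 / t\<^sup>2)")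
         (auto simp: ennreal_less_iff ennreal_neg)
  qed
  then show ?thesis
    using assms u_cont by (intro f_less_near_origin) (auto intro: continuous_on_subset)
qed

lemma minimizing_sequence_eventually_less:
  assumes "0 \<le> \<alpha>" "0 < \<beta>" "0 \<le> \<gamma>"
    and inX: "\<And>n. (us n, fs n) \<in> admissible \<alpha> \<beta> \<gamma>"
    and energy_bounded: "\<forall>\<^sub>F n in sequentially. energy \<alpha> \<beta> \<gamma> (us n) (fs n) < ennreal M"
    and range: "\<And>n r. 0 < r \<Longrightarrow> 0 \<le> fs n r \<and> fs n r \<le> 1"
    and zero_near_0: "\<And>n r. n \<ge> 1 \<Longrightarrow> 0 < r \<Longrightarrow> r \<le> 1 / real n \<Longrightarrow> fs n r = 0"
    and ode: "\<And>n. n \<ge> 1 \<Longrightarrow> \<exists>df. \<forall>r > 1 / real n.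
                 (fs n has_real_derivative df r) (at r) \<and>
                 (df has_real_derivative
                    (- 2 / r * df r + \<beta> / r\<^sup>2 * fs n r * (us n r)\<^sup>2
                     + \<gamma> * fs n r * ((fs n r)\<^sup>2 - 1))) (at r)"
    and \<rho>: "0 < \<epsilon>" "0 < \<rho>" "16 * M * \<rho> \<le> 1" "\<gamma> * \<rho>\<^sup>2 \<le> \<epsilon>" "32 * \<gamma> * \<rho>\<^sup>2 \<le> \<beta> * \<epsilon>"
    and "0 < a" and a_small: "a < \<rho> * exp (- 24 / (\<beta> * \<epsilon>)) / 2"
  shows "\<forall>\<^sub>F n in sequentially. fs n a < \<epsilon>"
  using energy_bounded eventually_ge_at_top[of 1] order_tendstoD(2)[OF lim_1_over_n \<open>0 < a\<close>]
proof eventually_elim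
  case (elim n)
  then have "0 < 1 / real n" by simp
  with elim assms(1-3) show ?case
    by (intro admissible_ode_solution_less_near_origin[OF _ _ _ inX elim(1) _
          zero_near_0[OF elim(2)] range ode[OF elim(2)] \<rho> _ a_small]) auto
qed

theorem lemma3p2:
  fixes \<alpha> \<beta> \<gamma> :: real
    and us fs :: "nat \<Rightarrow> real \<Rightarrow> real"
    and u f :: "real \<Rightarrow> real"
  assumes "\<alpha> > 0" and "\<beta> > 0" and "\<gamma> \<ge> 0"
    and inX: "\<And>n. (us n, fs n) \<in> admissible \<alpha> \<beta> \<gamma>"
    and minimizing: "(\<lambda>n. energy \<alpha> \<beta> \<gamma> (us n) (fs n)) \<longlonglongrightarrow> eta0 \<alpha> \<beta> \<gamma>"
    and bounds: "\<And>n r. r > 0 \<Longrightarrow> 0 \<le> us n r \<and> us n r \<le> 1 \<and> 0 \<le> fs n r \<and> fs n r \<le> 1"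
    and zero_near_0: "\<And>n r. n \<ge> 1 \<Longrightarrow> 0 < r \<Longrightarrow> r \<le> 1 / real n \<Longrightarrow> fs n r = 0"
    and ode: "\<And>n. n \<ge> 1 \<Longrightarrow> \<exists>df. \<forall>r > 1 / real n.
                 (fs n has_real_derivative df r) (at r) \<and>
                 (df has_real_derivative
                    (- 2 / r * df r + \<beta> / r\<^sup>2 * fs n r * (us n r)\<^sup>2
                     + \<gamma> * fs n r * ((fs n r)\<^sup>2 - 1))) (at r)"
    and "W12_loc u" and "W12_loc f"
    and weak: "\<And>a b. 0 < a \<Longrightarrow> a < b \<Longrightarrow> weak_W12_conv a b us u \<and> weak_W12_conv a b fs f"
    and unif: "\<And>a b. 0 < a \<Longrightarrow> a < b \<Longrightarrow>
                 uniform_limit {a..b} us u sequentially \<and> uniform_limit {a..b} fs f sequentially"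
  shows "(f \<longlongrightarrow> 0) (at_right 0)"
proof -
  have f_lim: "(\<lambda>n. fs n r) \<longlonglongrightarrow> f r" if "0 < r" for r
    using unif[of r "r + 1"] that by (intro tendsto_uniform_limitI) auto
  have fs_range: "0 \<le> fs n r \<and> fs n r \<le> 1" if "0 < r" for n r
    using bounds[OF that] by simp
  obtain M where energy_bounded: "\<forall>\<^sub>F n in sequentially. energy \<alpha> \<beta> \<gamma> (us n) (fs n) < ennreal M"
    using eventually_less_ennreal_of_tendsto[OF minimizing eta0_less_top[OF inX]] by blast
  have "\<forall>\<^sub>F r in at_right 0. f r < \<epsilon>" if "0 < \<epsilon>" for \<epsilon>
  proof -
    obtain \<rho> where \<rho>: "0 < \<rho>" "16 * M * \<rho> \<le> 1" "\<gamma> * \<rho>\<^sup>2 \<le> \<epsilon> / 2" "32 * \<gamma> * \<rho>\<^sup>2 \<le> \<beta> * (\<epsilon> / 2)"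
      using small_radius_exists[of \<beta> "\<epsilon> / 2"] \<open>0 < \<beta>\<close> \<open>0 < \<epsilon>\<close> by auto
    define \<delta> where "\<delta> = \<rho> * exp (- 24 / (\<beta> * (\<epsilon> / 2))) / 2"
    have "f a \<le> \<epsilon> / 2" if "0 < a" "a < \<delta>" for a
      using minimizing_sequence_eventually_less[OF _ \<open>0 < \<beta>\<close> \<open>0 \<le> \<gamma>\<close> inX energy_bounded fs_range
          zero_near_0 ode _ \<rho> that[unfolded \<delta>_def]] \<open>0 < \<alpha>\<close> \<open>0 < \<epsilon>\<close>
      by (intro tendsto_upperbound[OF f_lim[OF \<open>0 < a\<close>]]) (auto elim: eventually_mono)
    moreover have "0 < \<delta>" unfolding \<delta>_def using \<rho>(1) by simp
    ultimately show ?thesis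
      using \<open>0 < \<epsilon>\<close> unfolding eventually_at_right_field by force
  qed
  moreover have "\<forall>\<^sub>F r in at_right 0. 0 \<le> f r"
    using eventually_at_right_less[of 0]
    by eventually_elim (intro tendsto_lowerbound[OF f_lim] always_eventually; use fs_range in auto)
  ultimately show ?thesis
    by (intro order_tendstoI) (auto elim: eventually_mono)
qed

end
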